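(* Let $\ell=2m\ge2$, $a\in\mathfrak o_\ell^\times$ with image $\bar a\in\mathfrak o_m$, let $x\in\mathfrak g(\mathfrak o_m)$ be an $\bar a$-regular element, and let $\tilde x\in\mathfrak g(\mathfrak o_\ell)$ be any lift of $x$. Then (1) $\mathbf U(\mathfrak o_\ell)\cap C_{\mathbf G(\mathfrak o_\ell)}(\tilde x)K_\ell^m=\mathbf U(\varpi^m\mathfrak o_\ell)$; (2) the character $\varphi_x$ of $K_\ell^m$ agrees with $\theta_a$ on $\mathbf U(\varpi^m\mathfrak o_\ell)$, so that for any character $\widetilde{\varphi_x}$ of $C_{\mathbf G(\mathfrak o_\ell)}(\tilde x)K_\ell^m$ extending $\varphi_x$, $\mathrm{Hom}_{\mathbf U(\varpi^m\mathfrak o_\ell)}(\widetilde{\varphi_x},\theta_a)\ne0$.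
   Context: $\mathfrak o$: ring of integers of a non-archimedean local field, uniformizer $\varpi$, residue field $\mathbb F_q$ of characteristic $p$; $\mathfrak o_r=\mathfrak o/\varpi^r\mathfrak o$. Either $\mathbf G={\rm GL}_n$, $\mathfrak g=M_n$, or $\mathbf G={\rm SL}_n$, $\mathfrak g=\mathfrak{sl}_n$ with $p$ odd, $p\nmid n$. $\mathbf U(\mathfrak o_\ell)$: upper unitriangular matrices; $\mathbf U(\varpi^k\mathfrak o_\ell)$: those whose strictly upper triangular entries lie in $\varpi^k\mathfrak o_\ell$. $K_\ell^m=\ker(\mathbf G(\mathfrak o_\ell)\to\mathbf G(\mathfrak o_m))$. Fix a primitive character $\varphi$ of $(\mathfrak o_\ell,+)$ (nontrivial on $\varpi^{\ell-1}\mathfrak o_\ell$); $\varphi_x(I+\varpi^my)=\varphi(\varpi^m\mathrm{tr}(\hat xy))$ for $I+\varpi^my\in K_\ell^m$, $\hat x$ any lift of $x$; $\theta_a((u_{ij}))=\varphi(au_{12}+u_{23}+\dots+u_{n-1,n})$. For $\alpha\in\mathfrak o_m^\times$ an $\alpha$-regular element of $\mathfrak g(\mathfrak o_m)$ is a matrix with $(2,1)$ entry $\alpha$, $(i+1,i)$ entries $1$ for $2\le i\le n-1$, arbitrary last column, other entries $0$. $C_{\mathbf G(\mathfrak o_\ell)}(\tilde x)$ is the centralizer of $\tilde x$ in $\mathbf G(\mathfrak o_\ell)$. *)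

theory Defs
  imports Complex_Main "HOL-Computational_Algebra.Primes" "Jordan_Normal_Form.Determinant"
begin

text \<open>The ring of integers o of a non-archimedean local field is modelled as an integral
 domain 'a (the whole type) which is a complete discrete valuation ring with uniformizer w
 and finite residue field.  Elements of o_l = o / w^l o are represented by elements of o,
 and n x n matrices over o_l by n x n matrices over o, compared by congruence mod w^l.
 Matrix indices are 0-based.\<close>

definition local_int_ring :: "'a::idom \<Rightarrow> bool" where
  "local_int_ring w \<longleftrightarrow> w \<noteq> 0 \<and> \<not> w dvd 1
     \<and> (\<forall>x. x \<noteq> 0 \<longrightarrow> (\<exists>u k. u dvd 1 \<and> x = u * w ^ k))
     \<and> finite ((\<lambda>x. {y. w dvd x - y}) ` UNIV)
     \<and> (\<forall>s :: nat \<Rightarrow> 'a. (\<forall>k. \<exists>N. \<forall>i\<ge>N. \<forall>j\<ge>N. w ^ k dvd s i - s j)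
          \<longrightarrow> (\<exists>L. \<forall>k. \<exists>N. \<forall>i\<ge>N. w ^ k dvd s i - L))"

definition resid_char :: "'a::idom \<Rightarrow> nat \<Rightarrow> bool" where
  "resid_char w p \<longleftrightarrow> prime p \<and> w dvd of_nat p"

definition mtrace :: "'a::comm_ring_1 mat \<Rightarrow> 'a" where
  "mtrace A = (\<Sum>i<dim_row A. A $$ (i, i))"

definition cong_mat :: "'a::comm_ring_1 \<Rightarrow> nat \<Rightarrow> nat \<Rightarrow> 'a mat \<Rightarrow> 'a mat \<Rightarrow> bool" where
  "cong_mat w k n A B \<longleftrightarrow> (\<forall>i<n. \<forall>j<n. w ^ k dvd A $$ (i, j) - B $$ (i, j))"

text \<open>Representatives of G(o_l): sl = True means SL_n, sl = False means GL_n.\<close>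
definition grp :: "bool \<Rightarrow> 'a::comm_ring_1 \<Rightarrow> nat \<Rightarrow> nat \<Rightarrow> 'a mat set" where
  "grp sl w l n = {g \<in> carrier_mat n n.
      if sl then w ^ l dvd det g - 1 else (\<exists>u. w ^ l dvd det g * u - 1)}"

definition lie_alg :: "bool \<Rightarrow> 'a::comm_ring_1 \<Rightarrow> nat \<Rightarrow> nat \<Rightarrow> 'a mat set" where
  "lie_alg sl w l n = {X \<in> carrier_mat n n. sl \<longrightarrow> w ^ l dvd mtrace X}"

definition U_set :: "'a::comm_ring_1 \<Rightarrow> nat \<Rightarrow> nat \<Rightarrow> 'a mat set" where
  "U_set w l n = {g \<in> carrier_mat n n. \<forall>i<n. \<forall>j<n.
      (j < i \<longrightarrow> w ^ l dvd g $$ (i, j)) \<and> (i = j \<longrightarrow> w ^ l dvd g $$ (i, i) - 1)}"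

definition U_pi :: "'a::comm_ring_1 \<Rightarrow> nat \<Rightarrow> nat \<Rightarrow> nat \<Rightarrow> 'a mat set" where
  "U_pi w k l n = {g \<in> U_set w l n. \<forall>i<n. \<forall>j<n. i < j \<longrightarrow> w ^ k dvd g $$ (i, j)}"

definition centralizer :: "bool \<Rightarrow> 'a::comm_ring_1 \<Rightarrow> nat \<Rightarrow> nat \<Rightarrow> 'a mat \<Rightarrow> 'a mat set" where
  "centralizer sl w l n X = {h \<in> grp sl w l n. cong_mat w l n (h * X) (X * h)}"

definition Kker :: "bool \<Rightarrow> 'a::comm_ring_1 \<Rightarrow> nat \<Rightarrow> nat \<Rightarrow> nat \<Rightarrow> 'a mat set" where
  "Kker sl w l m n = {k \<in> grp sl w l n. cong_mat w m n k (1\<^sub>m n)}"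

definition prod_mod :: "bool \<Rightarrow> 'a::comm_ring_1 \<Rightarrow> nat \<Rightarrow> nat \<Rightarrow> 'a mat set \<Rightarrow> 'a mat set \<Rightarrow> 'a mat set" where
  "prod_mod sl w l n A B = {g \<in> grp sl w l n. \<exists>h\<in>A. \<exists>k\<in>B. cong_mat w l n g (h * k)}"

definition alpha_regular :: "'a::comm_ring_1 \<Rightarrow> nat \<Rightarrow> nat \<Rightarrow> 'a \<Rightarrow> 'a mat \<Rightarrow> bool" where
  "alpha_regular w m n \<alpha> X \<longleftrightarrow> X \<in> carrier_mat n n \<and>
     (\<forall>i<n. \<forall>j<n. j \<noteq> n - 1 \<longrightarrow>
        w ^ m dvd X $$ (i, j) - (if i = 1 \<and> j = 0 then \<alpha>
                                 else if i = j + 1 \<and> 1 \<le> j then 1 else 0))"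

definition add_char :: "'a::comm_ring_1 \<Rightarrow> nat \<Rightarrow> ('a \<Rightarrow> complex) \<Rightarrow> bool" where
  "add_char w l \<phi> \<longleftrightarrow> (\<forall>x y. \<phi> (x + y) = \<phi> x * \<phi> y) \<and> (\<forall>x. \<phi> x \<noteq> 0)
      \<and> (\<forall>x. w ^ l dvd x \<longrightarrow> \<phi> x = 1)"

definition primitive_char :: "'a::comm_ring_1 \<Rightarrow> nat \<Rightarrow> ('a \<Rightarrow> complex) \<Rightarrow> bool" where
  "primitive_char w l \<phi> \<longleftrightarrow> add_char w l \<phi> \<and> (\<exists>y. \<phi> (w ^ (l - 1) * y) \<noteq> 1)"

definition phi_x :: "('a::comm_ring_1 \<Rightarrow> complex) \<Rightarrow> 'a \<Rightarrow> nat \<Rightarrow> 'a mat \<Rightarrow> 'a mat \<Rightarrow> complex" where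
  "phi_x \<phi> w m X k = \<phi> (w ^ m * mtrace (X * (THE y. y \<in> carrier_mat (dim_row k) (dim_row k)
        \<and> k = 1\<^sub>m (dim_row k) + w ^ m \<cdot>\<^sub>m y)))"

definition theta :: "('a::comm_ring_1 \<Rightarrow> complex) \<Rightarrow> 'a \<Rightarrow> 'a mat \<Rightarrow> complex" where
  "theta \<phi> a u = \<phi> (a * u $$ (0, 1) + (\<Sum>i\<in>{1..<dim_row u - 1}. u $$ (i, i + 1)))"

definition is_char_on :: "'a::comm_ring_1 \<Rightarrow> nat \<Rightarrow> nat \<Rightarrow> 'a mat set \<Rightarrow> ('a mat \<Rightarrow> complex) \<Rightarrow> bool" where
  "is_char_on w l n S \<chi> \<longleftrightarrow> (\<forall>g\<in>S. \<chi> g \<noteq> 0) \<and> (\<forall>g\<in>S. \<forall>h\<in>S. \<chi> (g * h) = \<chi> g * \<chi> h)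
      \<and> (\<forall>g\<in>S. \<forall>g'\<in>S. cong_mat w l n g g' \<longrightarrow> \<chi> g = \<chi> g')"

text \<open>Hom_S(chi, psi) for one-dimensional representations: linear maps C -> C, i.e. scalars,
 intertwining chi and psi on S.\<close>
definition hom_chars :: "'b set \<Rightarrow> ('b \<Rightarrow> complex) \<Rightarrow> ('b \<Rightarrow> complex) \<Rightarrow> complex set" where
  "hom_chars S \<chi> \<psi> = {c. \<forall>u\<in>S. c * \<chi> u = \<psi> u * c}"

end

theory Submission
  imports Defs
begin

text \<open>Modulo \<open>w^m\<close>, an element \<open>g = h k\<close> of \<open>C(xt) K_l^m\<close> agrees with \<open>h\<close>, hence commutes with
 \<open>x\<close>. If \<open>s\<close> is the subdiagonal of the regular element \<open>x\<close> (all units), the \<open>(i, j)\<close> entries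
 of \<open>g x\<close> and \<open>x g\<close> are \<open>s j g(i, j+1)\<close> and \<open>s (i-1) g(i-1, j)\<close> modulo \<open>w^m\<close> when \<open>g\<close>
 is unitriangular, so the vanishing of the entries above the diagonal propagates row by row,
 starting from the first row.
 For \<open>u = 1 + w^m y\<close> in \<open>U(w^m o_l)\<close> the matrix \<open>u - 1\<close> is \<open>0\<close> modulo \<open>w^l = w^m w^m\<close> on and
 below the diagonal and \<open>0\<close> modulo \<open>w^m\<close> above it, so modulo \<open>w^l\<close> only the subdiagonal of
 \<open>x\<close> contributes to \<open>w^m tr(x y) = tr(x (u - 1))\<close>, leaving exactly the argument of \<open>\<theta>_a u\<close>.
 Thus \<open>\<phi>_x = \<theta>_a\<close> on \<open>U(w^m o_l)\<close> and the identity intertwines every extension of \<open>\<phi>_x\<close>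
 with \<open>\<theta>_a\<close>.\<close>

lemma dvd_diff_mult_cong:
  fixes d :: "'a::comm_ring_1"
  assumes "d dvd a - b" "d dvd c - e"
  shows "d dvd a * c - b * e"
proof -
  have "a * c - b * e = a * (c - e) + (a - b) * e" by (simp add: algebra_simps)
  then show ?thesis using assms by (simp add: dvd_add dvd_mult dvd_mult2)
qed

lemma dvd_sum_diff_cong:
  fixes d :: "'a::comm_ring_1"
  assumes "\<And>i. i \<in> S \<Longrightarrow> d dvd f i - g i"
  shows "d dvd sum f S - sum g S"
  by (simp add: sum_subtractf[symmetric] dvd_sum assms)

lemma dvd_prod_diff_cong:
  fixes d :: "'a::comm_ring_1"
  assumes "finite S" "\<And>i. i \<in> S \<Longrightarrow> d dvd f i - g i"
  shows "d dvd prod f S - prod g S"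
  using assms by (induction S rule: finite_induct) (auto intro: dvd_diff_mult_cong)

lemma dvd_unit_mult_cancel:
  fixes d :: "'a::comm_ring_1"
  assumes "d dvd s * z" "d dvd s * v - 1"
  shows "d dvd z"
proof -
  have "z = v * (s * z) - z * (s * v - 1)" by (simp add: algebra_simps)
  then show ?thesis using assms by (metis dvd_diff dvd_mult dvd_mult2)
qed

lemma det_dvd_diff_cong:
  fixes d :: "'a::comm_ring_1"
  assumes A: "A \<in> carrier_mat n n" and B: "B \<in> carrier_mat n n"
    and AB: "\<And>i j. i < n \<Longrightarrow> j < n \<Longrightarrow> d dvd A $$ (i, j) - B $$ (i, j)"
  shows "d dvd det A - det B"
proof -
  have "d dvd signof p * (\<Prod>i=0..<n. A $$ (i, p i)) - signof p * (\<Prod>i=0..<n. B $$ (i, p i))"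
    if "p permutes {0..<n}" for p
  proof -
    have "\<And>i. i < n \<Longrightarrow> p i < n" using that permutes_in_image by fastforce
    then have "d dvd (\<Prod>i=0..<n. A $$ (i, p i)) - (\<Prod>i=0..<n. B $$ (i, p i))"
      by (intro dvd_prod_diff_cong) (auto intro: AB)
    then show ?thesis by (simp add: right_diff_distrib[symmetric])
  qed
  then show ?thesis
    unfolding det_def'[OF A] det_def'[OF B] by (intro dvd_sum_diff_cong) simp
qed

lemma cong_mat_refl: "cong_mat d k n A A"
  by (simp add: cong_mat_def)

lemma cong_mat_sym:
  fixes d :: "'a::comm_ring_1"
  assumes "cong_mat d k n A B"
  shows "cong_mat d k n B A"
  unfolding cong_mat_def
proof (intro allI impI)
  fix i j assume "i < n" "j < n"
  then have "d ^ k dvd - (A $$ (i, j) - B $$ (i, j))"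
    using assms by (simp only: cong_mat_def dvd_minus_iff)
  then show "d ^ k dvd B $$ (i, j) - A $$ (i, j)" by simp
qed

lemma cong_mat_trans [trans]:
  fixes d :: "'a::comm_ring_1"
  assumes "cong_mat d k n A B" "cong_mat d k n B C"
  shows "cong_mat d k n A C"
  unfolding cong_mat_def
proof (intro allI impI)
  fix i j assume "i < n" "j < n"
  then have "d ^ k dvd (A $$ (i, j) - B $$ (i, j)) + (B $$ (i, j) - C $$ (i, j))"
    using assms unfolding cong_mat_def by (blast intro: dvd_add)
  then show "d ^ k dvd A $$ (i, j) - C $$ (i, j)" by simp
qed

lemma cong_mat_mono:
  fixes d :: "'a::comm_ring_1"
  assumes "cong_mat d k n A B" "m \<le> k"
  shows "cong_mat d m n A B"
  using assms unfolding cong_mat_def by (meson dvd_trans le_imp_power_dvd)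

lemma cong_mat_mult:
  fixes d :: "'a::comm_ring_1"
  assumes "A \<in> carrier_mat n n" "A' \<in> carrier_mat n n" "B \<in> carrier_mat n n" "B' \<in> carrier_mat n n"
    and "cong_mat d k n A A'" "cong_mat d k n B B'"
  shows "cong_mat d k n (A * B) (A' * B')"
  unfolding cong_mat_def
proof (intro allI impI)
  fix i j assume ij: "i < n" "j < n"
  have "d ^ k dvd (\<Sum>t=0..<n. A $$ (i, t) * B $$ (t, j)) - (\<Sum>t=0..<n. A' $$ (i, t) * B' $$ (t, j))"
    using assms ij by (intro dvd_sum_diff_cong dvd_diff_mult_cong) (auto simp: cong_mat_def)
  then show "d ^ k dvd (A * B) $$ (i, j) - (A' * B') $$ (i, j)"
    using assms ij by (simp add: scalar_prod_def)
qed

lemma add_char_dvd_diff_eq: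
  assumes "add_char w l \<phi>" "w ^ l dvd A - B"
  shows "\<phi> A = \<phi> B"
proof -
  have "\<phi> A = \<phi> (B + (A - B))" by simp
  also have "\<dots> = \<phi> B * \<phi> (A - B)" using assms(1) unfolding add_char_def by blast
  also have "\<phi> (A - B) = 1" using assms by (simp add: add_char_def)
  finally show ?thesis by simp
qed

lemma U_set_det_dvd_diff_1:
  fixes w :: "'a::comm_ring_1"
  assumes "g \<in> U_set w l n"
  shows "w ^ l dvd det g - 1"
proof -
  have g: "g \<in> carrier_mat n n" using assms by (simp add: U_set_def)
  define B where "B = mat n n (\<lambda>(i, j). if i < j then g $$ (i, j) else if i = j then 1 else (0::'a))"
  have B: "B \<in> carrier_mat n n" by (simp add: B_def)
  have "upper_triangular B" unfolding upper_triangular_def B_def by auto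
  then have "det B = prod_list (diag_mat B)" using B by (rule det_upper_triangular)
  also have "diag_mat B = replicate n 1"
    by (rule nth_equalityI) (auto simp: diag_mat_def B_def)
  finally have "det B = 1" by simp
  moreover have "w ^ l dvd det g - det B"
  proof (rule det_dvd_diff_cong[OF g B])
    fix i j assume "i < n" "j < n"
    then show "w ^ l dvd g $$ (i, j) - B $$ (i, j)" using assms
      by (cases "i < j"; cases "i = j") (auto simp: B_def U_set_def)
  qed
  ultimately show ?thesis by simp
qed

lemma U_pi_subset_Kker:
  fixes w :: "'a::comm_ring_1"
  assumes "m \<le> l"
  shows "U_pi w m l n \<subseteq> Kker sl w l m n"
proof
  fix g assume g: "g \<in> U_pi w m l n"
  then have gU: "g \<in> U_set w l n" and gC: "g \<in> carrier_mat n n" by (simp_all add: U_pi_def U_set_def)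
  have "w ^ l dvd det g - 1" using gU by (rule U_set_det_dvd_diff_1)
  then have "g \<in> grp sl w l n" using gC unfolding grp_def by (cases sl) (auto intro: exI[of _ 1])
  moreover have "cong_mat w m n g (1\<^sub>m n)"
    unfolding cong_mat_def
  proof (intro allI impI)
    fix i j assume "i < n" "j < n"
    moreover have "w ^ m dvd w ^ l" using assms by (rule le_imp_power_dvd)
    ultimately show "w ^ m dvd g $$ (i, j) - 1\<^sub>m n $$ (i, j)"
      using g by (cases "i < j"; cases "i = j") (auto simp: U_pi_def U_set_def intro: dvd_trans)
  qed
  ultimately show "g \<in> Kker sl w l m n" by (simp add: Kker_def)
qed

lemma U_pi_subset_prod_mod:
  fixes w :: "'a::comm_ring_1"
  assumes "m \<le> l" and "X \<in> carrier_mat n n"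
  shows "U_pi w m l n \<subseteq> prod_mod sl w l n (centralizer sl w l n X) (Kker sl w l m n)"
proof
  fix g assume "g \<in> U_pi w m l n"
  then have gK: "g \<in> Kker sl w l m n" using U_pi_subset_Kker[OF assms(1)] by blast
  then have "g \<in> grp sl w l n" and "g \<in> carrier_mat n n" by (auto simp: Kker_def grp_def)
  moreover have "1\<^sub>m n \<in> centralizer sl w l n X"
    using assms(2) by (auto simp: centralizer_def grp_def cong_mat_def intro: exI[of _ 1])
  ultimately show "g \<in> prod_mod sl w l n (centralizer sl w l n X) (Kker sl w l m n)"
    using gK unfolding prod_mod_def by (auto intro!: bexI cong_mat_refl)
qed

lemma prod_mod_commutes:
  fixes w :: "'a::comm_ring_1"
  assumes "g \<in> prod_mod sl w l n (centralizer sl w l n X) (Kker sl w l m n)"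
    and "m \<le> l" and x: "x \<in> carrier_mat n n" and X: "X \<in> carrier_mat n n"
    and Xx: "cong_mat w m n X x"
  shows "cong_mat w m n (g * x) (x * g)"
proof -
  from assms(1) obtain h k where h: "h \<in> centralizer sl w l n X" and k: "k \<in> Kker sl w l m n"
    and ghk: "cong_mat w l n g (h * k)" and g: "g \<in> carrier_mat n n"
    unfolding prod_mod_def grp_def by blast
  have hC: "h \<in> carrier_mat n n" using h by (simp add: centralizer_def grp_def)
  have kC: "k \<in> carrier_mat n n" using k by (simp add: Kker_def grp_def)
  have "cong_mat w m n (h * k) (h * 1\<^sub>m n)"
    using k by (intro cong_mat_mult[OF hC hC kC] cong_mat_refl) (simp_all add: Kker_def)
  then have gh: "cong_mat w m n g h"
    using cong_mat_mono[OF ghk \<open>m \<le> l\<close>] hC by (auto intro: cong_mat_trans)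
  have "cong_mat w m n (g * x) (h * X)"
    by (rule cong_mat_mult[OF g hC x X gh cong_mat_sym[OF Xx]])
  also have "cong_mat w m n (h * X) (X * h)"
    using h \<open>m \<le> l\<close> by (auto simp: centralizer_def intro: cong_mat_mono)
  also have "cong_mat w m n (X * h) (x * g)"
    by (rule cong_mat_mult[OF X x hC g Xx cong_mat_sym[OF gh]])
  finally show ?thesis .
qed

subsection \<open>Commuting with a regular element\<close>

definition subdiag :: "'a::one \<Rightarrow> nat \<Rightarrow> 'a" where
  "subdiag a j = (if j = 0 then a else 1)"

lemma alpha_regular_entry:
  assumes "alpha_regular w m n a x" and "i < n" "t < n" "t \<noteq> n - 1"
  shows "w ^ m dvd x $$ (i, t) - (if i = t + 1 then subdiag a t else 0)"
proof -
  have "w ^ m dvd x $$ (i, t) - (if i = 1 \<and> t = 0 then a else if i = t + 1 \<and> 1 \<le> t then 1 else 0)"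
    using assms unfolding alpha_regular_def by blast
  moreover have "(if i = 1 \<and> t = 0 then a else if i = t + 1 \<and> 1 \<le> t then 1 else 0)
      = (if i = t + 1 then subdiag a t else 0)" by (auto simp: subdiag_def)
  ultimately show ?thesis by simp
qed

lemma mult_subdiag_entry_cong:
  fixes d :: "'a::comm_ring_1"
  assumes g: "g \<in> carrier_mat n n" and x: "x \<in> carrier_mat n n"
    and x_sub: "\<And>i t. i < n \<Longrightarrow> t < n \<Longrightarrow> t \<noteq> n - 1 \<Longrightarrow> d dvd x $$ (i, t) - (if i = t + 1 then s t else 0)"
    and i: "i < n" and j: "j + 1 < n"
  shows "d dvd (g * x) $$ (i, j) - s j * g $$ (i, j + 1)"
proof -
  have "d dvd (\<Sum>t=0..<n. g $$ (i, t) * x $$ (t, j))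
              - (\<Sum>t=0..<n. g $$ (i, t) * (if t = j + 1 then s j else 0))"
    using x_sub j by (intro dvd_sum_diff_cong dvd_diff_mult_cong) auto
  moreover have "(\<Sum>t=0..<n. g $$ (i, t) * (if t = j + 1 then s j else 0))
      = (\<Sum>t=0..<n. if t = j + 1 then s j * g $$ (i, t) else 0)"
    by (intro sum.cong) auto
  ultimately show ?thesis using g x i j by (simp add: scalar_prod_def sum.delta')
qed

text \<open>The last column of \<open>x\<close> is arbitrary; it only enters through \<open>g (n - 1, j)\<close>, which is why
 that entry is assumed to vanish.\<close>

lemma subdiag_mult_entry_cong:
  fixes d :: "'a::comm_ring_1"
  assumes g: "g \<in> carrier_mat n n" and x: "x \<in> carrier_mat n n"
    and x_sub: "\<And>i t. i < n \<Longrightarrow> t < n \<Longrightarrow> t \<noteq> n - 1 \<Longrightarrow> d dvd x $$ (i, t) - (if i = t + 1 then s t else 0)"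
    and g_last: "d dvd g $$ (n - 1, j)"
    and i: "i < n" and j: "j < n"
  shows "d dvd (x * g) $$ (i, j) - (if 0 < i then s (i - 1) * g $$ (i - 1, j) else 0)"
proof -
  have "d dvd (\<Sum>t=0..<n. x $$ (i, t) * g $$ (t, j))
              - (\<Sum>t=0..<n. (if i = t + 1 \<and> t \<noteq> n - 1 then s t else 0) * g $$ (t, j))"
  proof (rule dvd_sum_diff_cong)
    fix t assume t: "t \<in> {0..<n}"
    show "d dvd x $$ (i, t) * g $$ (t, j) - (if i = t + 1 \<and> t \<noteq> n - 1 then s t else 0) * g $$ (t, j)"
    proof (cases "t = n - 1")
      case True
      then show ?thesis using g_last by simp
    next
      case False
      then show ?thesis using x_sub[of i t] i t by (auto intro!: dvd_diff_mult_cong)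
    qed
  qed
  moreover have "(\<Sum>t=0..<n. (if i = t + 1 \<and> t \<noteq> n - 1 then s t else 0) * g $$ (t, j))
      = (if 0 < i then s (i - 1) * g $$ (i - 1, j) else 0)"
  proof (cases "i = 0")
    case False
    then have "(\<Sum>t=0..<n. (if i = t + 1 \<and> t \<noteq> n - 1 then s t else 0) * g $$ (t, j))
        = (\<Sum>t=0..<n. if t = i - 1 then s t * g $$ (t, j) else 0)"
      using i by (intro sum.cong) auto
    then show ?thesis using False i by (simp add: sum.delta')
  qed simp
  ultimately show ?thesis using g x i j by (simp add: scalar_prod_def)
qed

lemma commutator_entry_cong:
  fixes d :: "'a::comm_ring_1"
  assumes g: "g \<in> carrier_mat n n" and x: "x \<in> carrier_mat n n"
    and x_sub: "\<And>i t. i < n \<Longrightarrow> t < n \<Longrightarrow> t \<noteq> n - 1 \<Longrightarrow> d dvd x $$ (i, t) - (if i = t + 1 then s t else 0)"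
    and g_last: "d dvd g $$ (n - 1, j)"
    and i: "i < n" and j: "j + 1 < n"
    and gx: "d dvd (g * x) $$ (i, j) - (x * g) $$ (i, j)"
  shows "d dvd s j * g $$ (i, j + 1) - (if 0 < i then s (i - 1) * g $$ (i - 1, j) else 0)"
proof -
  have "s j * g $$ (i, j + 1) - (if 0 < i then s (i - 1) * g $$ (i - 1, j) else 0)
      = ((g * x) $$ (i, j) - (x * g) $$ (i, j)) - ((g * x) $$ (i, j) - s j * g $$ (i, j + 1))
        + ((x * g) $$ (i, j) - (if 0 < i then s (i - 1) * g $$ (i - 1, j) else 0))"
    by (simp add: algebra_simps)
  moreover have "d dvd (g * x) $$ (i, j) - s j * g $$ (i, j + 1)"
    by (rule mult_subdiag_entry_cong[OF g x x_sub i j])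
  moreover have "d dvd (x * g) $$ (i, j) - (if 0 < i then s (i - 1) * g $$ (i - 1, j) else 0)"
    using subdiag_mult_entry_cong[OF g x x_sub g_last i] j by simp
  ultimately show ?thesis using gx by (metis dvd_add dvd_diff)
qed

lemma commutes_regular_upper_dvd:
  fixes w :: "'a::comm_ring_1"
  assumes g: "g \<in> carrier_mat n n" and x: "x \<in> carrier_mat n n"
    and x_sub: "\<And>i t. i < n \<Longrightarrow> t < n \<Longrightarrow> t \<noteq> n - 1
                  \<Longrightarrow> w ^ m dvd x $$ (i, t) - (if i = t + 1 then s t else 0)"
    and s_unit: "\<And>t. \<exists>v. w ^ m dvd s t * v - 1"
    and g_lower: "\<And>i j. i < n \<Longrightarrow> j < i \<Longrightarrow> w ^ m dvd g $$ (i, j)"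
    and gx: "cong_mat w m n (g * x) (x * g)"
  shows "i < j \<Longrightarrow> j < n \<Longrightarrow> w ^ m dvd g $$ (i, j)"
proof (induction i arbitrary: j)
  case 0
  then obtain j' where j': "j = Suc j'" by (cases j) auto
  have "w ^ m dvd g $$ (n - 1, j')" using 0 j' by (intro g_lower) auto
  moreover have "w ^ m dvd (g * x) $$ (0, j') - (x * g) $$ (0, j')"
    using gx 0 j' by (simp add: cong_mat_def)
  ultimately have "w ^ m dvd s j' * g $$ (0, j)"
    using commutator_entry_cong[OF g x x_sub, where i = 0 and j = j'] 0 j' by simp
  then show ?case using s_unit dvd_unit_mult_cancel by blast
next
  case (Suc i)
  then obtain j' where j': "j = Suc j'" by (cases j) auto
  have "w ^ m dvd g $$ (n - 1, j')" using Suc j' by (intro g_lower) auto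
  moreover have "w ^ m dvd (g * x) $$ (Suc i, j') - (x * g) $$ (Suc i, j')"
    using gx Suc j' by (simp add: cong_mat_def)
  ultimately have "w ^ m dvd s j' * g $$ (Suc i, j) - s i * g $$ (i, j')"
    using commutator_entry_cong[OF g x x_sub, where i = "Suc i" and j = j'] Suc j' by simp
  moreover have "w ^ m dvd s i * g $$ (i, j')" using Suc j' by simp
  ultimately have "w ^ m dvd (s j' * g $$ (Suc i, j) - s i * g $$ (i, j')) + s i * g $$ (i, j')"
    by (rule dvd_add)
  then have "w ^ m dvd s j' * g $$ (Suc i, j)" by simp
  then show ?case using s_unit dvd_unit_mult_cancel by blast
qed

lemma U_set_commuting_regular_in_U_pi:
  fixes w :: "'a::comm_ring_1"
  assumes "m \<le> l" and g: "g \<in> U_set w l n" and x: "alpha_regular w m n a x"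
    and a: "\<exists>v. w ^ m dvd a * v - 1" and gx: "cong_mat w m n (g * x) (x * g)"
  shows "g \<in> U_pi w m l n"
proof -
  have gC: "g \<in> carrier_mat n n" using g by (simp add: U_set_def)
  have xC: "x \<in> carrier_mat n n" using x by (simp add: alpha_regular_def)
  have "\<exists>v. w ^ m dvd subdiag a t * v - 1" for t
    using a by (cases "t = 0") (auto simp: subdiag_def intro: exI[of _ 1])
  moreover have "w ^ m dvd g $$ (i, j)" if "i < n" "j < i" for i j
    using g that le_imp_power_dvd[OF \<open>m \<le> l\<close>, where a = w] by (auto simp: U_set_def intro: dvd_trans)
  ultimately have "w ^ m dvd g $$ (i, j)" if "i < j" "j < n" for i j
    using commutes_regular_upper_dvd[OF gC xC alpha_regular_entry[OF x] _ _ gx] that by blast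
  then show ?thesis using g by (simp add: U_pi_def)
qed

lemma U_set_inter_prod_mod_eq:
  fixes w :: "'a::comm_ring_1"
  assumes "m \<le> l" and x: "x \<in> carrier_mat n n" and X: "X \<in> carrier_mat n n"
    and "alpha_regular w m n a x" and "\<exists>v. w ^ m dvd a * v - 1" and "cong_mat w m n X x"
  shows "U_set w l n \<inter> prod_mod sl w l n (centralizer sl w l n X) (Kker sl w l m n) = U_pi w m l n"
proof (intro equalityI subsetI)
  fix g assume "g \<in> U_set w l n \<inter> prod_mod sl w l n (centralizer sl w l n X) (Kker sl w l m n)"
  then show "g \<in> U_pi w m l n"
    using prod_mod_commutes[OF _ \<open>m \<le> l\<close> x X \<open>cong_mat w m n X x\<close>]
      U_set_commuting_regular_in_U_pi[OF \<open>m \<le> l\<close> _ assms(4,5)] by blast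
qed (use U_pi_subset_prod_mod[OF \<open>m \<le> l\<close> X] in \<open>auto simp: U_pi_def\<close>)

subsection \<open>The character \<open>\<phi>\<^sub>x\<close> on \<open>U(w^m o\<^sub>l)\<close>\<close>

lemma smult_mat_obtain:
  fixes c :: "'a::comm_ring_1"
  assumes "A \<in> carrier_mat n n" and "\<And>i j. i < n \<Longrightarrow> j < n \<Longrightarrow> c dvd A $$ (i, j)"
  obtains y where "y \<in> carrier_mat n n" and "A = c \<cdot>\<^sub>m y"
proof
  define y where "y = mat n n (\<lambda>(i, j). SOME e. A $$ (i, j) = c * e)"
  show "y \<in> carrier_mat n n" by (simp add: y_def)
  show "A = c \<cdot>\<^sub>m y"
  proof (rule eq_matI)
    fix i j assume "i < dim_row (c \<cdot>\<^sub>m y)" "j < dim_col (c \<cdot>\<^sub>m y)"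
    then have ij: "i < n" "j < n" by (simp_all add: y_def)
    obtain e where "A $$ (i, j) = c * e" using assms(2)[OF ij] by (rule dvdE)
    then have "A $$ (i, j) = c * (SOME e. A $$ (i, j) = c * e)" by (rule someI)
    then show "A $$ (i, j) = (c \<cdot>\<^sub>m y) $$ (i, j)" using ij by (simp add: y_def)
  qed (use assms(1) in \<open>simp_all add: y_def\<close>)
qed

lemma phi_x_one_plus_smult:
  fixes w :: "'a::idom"
  assumes "w ^ m \<noteq> 0" and y: "y \<in> carrier_mat n n"
  shows "phi_x \<phi> w m x (1\<^sub>m n + w ^ m \<cdot>\<^sub>m y) = \<phi> (w ^ m * mtrace (x * y))"
proof -
  have "(THE y'. y' \<in> carrier_mat n n \<and> 1\<^sub>m n + w ^ m \<cdot>\<^sub>m y = 1\<^sub>m n + w ^ m \<cdot>\<^sub>m y') = y"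
  proof (rule the_equality)
    fix y' assume "y' \<in> carrier_mat n n \<and> 1\<^sub>m n + w ^ m \<cdot>\<^sub>m y = 1\<^sub>m n + w ^ m \<cdot>\<^sub>m y'"
    then have y': "y' \<in> carrier_mat n n" and yy': "1\<^sub>m n + w ^ m \<cdot>\<^sub>m y = 1\<^sub>m n + w ^ m \<cdot>\<^sub>m y'"
      by simp_all
    show "y' = y"
    proof (rule eq_matI)
      fix i j assume "i < dim_row y" "j < dim_col y"
      then have ij: "i < n" "j < n" using y by simp_all
      have "(1\<^sub>m n + w ^ m \<cdot>\<^sub>m y) $$ (i, j) = (1\<^sub>m n + w ^ m \<cdot>\<^sub>m y') $$ (i, j)"
        using yy' by simp
      then have "w ^ m * y $$ (i, j) = w ^ m * y' $$ (i, j)"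
        using ij y y' by simp
      then show "y' $$ (i, j) = y $$ (i, j)" using assms(1) by auto
    qed (use y y' in simp_all)
  qed (use y in simp)
  then show ?thesis using y by (simp add: phi_x_def)
qed

lemma mtrace_smult:
  assumes "A \<in> carrier_mat n n"
  shows "mtrace (c \<cdot>\<^sub>m A) = c * mtrace A"
  using assms by (auto simp: mtrace_def sum_distrib_left intro: sum.cong)

lemma mtrace_mult_subdiag_cong:
  fixes d e :: "'a::comm_ring_1"
  assumes x: "x \<in> carrier_mat n n" and z: "z \<in> carrier_mat n n"
    and x_sub: "\<And>i t. i < n \<Longrightarrow> t < n \<Longrightarrow> t \<noteq> n - 1 \<Longrightarrow> d dvd x $$ (i, t) - (if i = t + 1 then s t else 0)"
    and z_lower: "\<And>k i. i < n \<Longrightarrow> i \<le> k \<Longrightarrow> k < n \<Longrightarrow> d * e dvd z $$ (k, i)"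
    and z_upper: "\<And>k i. k < i \<Longrightarrow> i < n \<Longrightarrow> e dvd z $$ (k, i)"
  shows "d * e dvd mtrace (x * z) - (\<Sum>k<n - 1. s k * z $$ (k, k + 1))"
proof -
  have "d * e dvd (\<Sum>i<n. \<Sum>k<n. x $$ (i, k) * z $$ (k, i))
                 - (\<Sum>i<n. \<Sum>k<n. if i = k + 1 then s k * z $$ (k, i) else 0)"
  proof (intro dvd_sum_diff_cong)
    fix i k assume i: "i \<in> {..<n}" and k: "k \<in> {..<n}"
    show "d * e dvd x $$ (i, k) * z $$ (k, i) - (if i = k + 1 then s k * z $$ (k, i) else 0)"
    proof (cases "k < i")
      case True
      then have "d * e dvd (x $$ (i, k) - (if i = k + 1 then s k else 0)) * z $$ (k, i)"
        using i k by (intro mult_dvd_mono x_sub z_upper) auto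
      moreover have "(x $$ (i, k) - (if i = k + 1 then s k else 0)) * z $$ (k, i)
          = x $$ (i, k) * z $$ (k, i) - (if i = k + 1 then s k * z $$ (k, i) else 0)"
        by (simp add: algebra_simps)
      ultimately show ?thesis by simp
    qed (use i k z_lower in simp)
  qed
  moreover have "mtrace (x * z) = (\<Sum>i<n. \<Sum>k<n. x $$ (i, k) * z $$ (k, i))"
    using x z by (simp add: mtrace_def scalar_prod_def lessThan_atLeast0)
  moreover have "(\<Sum>i<n. \<Sum>k<n. if i = k + 1 then s k * z $$ (k, i) else 0)
      = (\<Sum>k<n - 1. s k * z $$ (k, k + 1))"
  proof -
    have "(\<Sum>i<n. \<Sum>k<n. if i = k + 1 then s k * z $$ (k, i) else 0)
        = (\<Sum>k<n. if k + 1 < n then s k * z $$ (k, k + 1) else 0)"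
      by (subst sum.swap, intro sum.cong refl) (simp add: sum.delta)
    also have "\<dots> = (\<Sum>k<n - 1. s k * z $$ (k, k + 1))"
    proof -
      have "{..<n - 1} = {k \<in> {..<n}. k + 1 < n}" by auto
      then show ?thesis by (simp only: sum.inter_filter[OF finite_lessThan])
    qed
    finally show ?thesis .
  qed
  ultimately show ?thesis by simp
qed

lemma sum_subdiag_eq:
  fixes a :: "'a::comm_semiring_1"
  assumes "n \<ge> 2"
  shows "(\<Sum>k<n - 1. subdiag a k * f k) = a * f 0 + (\<Sum>k\<in>{1..<n - 1}. f k)"
proof -
  have "{..<n - 1} = insert 0 {1..<n - 1}" using assms by auto
  then have "(\<Sum>k<n - 1. subdiag a k * f k) = a * f 0 + (\<Sum>k\<in>{1..<n - 1}. subdiag a k * f k)"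
    by (simp add: subdiag_def)
  also have "(\<Sum>k\<in>{1..<n - 1}. subdiag a k * f k) = (\<Sum>k\<in>{1..<n - 1}. f k)"
    by (intro sum.cong) (auto simp: subdiag_def)
  finally show ?thesis .
qed

lemma phi_x_eq_theta_on_U_pi:
  fixes w :: "'a::idom"
  assumes "w \<noteq> 0" and ch: "add_char w l \<phi>" and "l = 2 * m" and "n \<ge> 2"
    and x: "alpha_regular w m n a x" and u: "u \<in> U_pi w m l n"
  shows "phi_x \<phi> w m x u = theta \<phi> a u"
proof -
  have xC: "x \<in> carrier_mat n n" using x by (simp add: alpha_regular_def)
  have uC: "u \<in> carrier_mat n n" using u by (simp add: U_pi_def U_set_def)
  have wl: "w ^ l = w ^ m * w ^ m" using \<open>l = 2 * m\<close> by (simp add: mult_2 power_add)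
  define z where "z = u - 1\<^sub>m n"
  have zC: "z \<in> carrier_mat n n" and z_ij: "\<And>i j. i < n \<Longrightarrow> j < n \<Longrightarrow> z $$ (i, j) = u $$ (i, j) - (if i = j then 1 else 0)"
    using uC by (auto simp: z_def)
  have z_lower: "w ^ m * w ^ m dvd z $$ (k, i)" if "i < n" "i \<le> k" "k < n" for k i
    using u that unfolding wl[symmetric] by (cases "i = k") (auto simp: U_pi_def U_set_def z_ij)
  have z_upper: "w ^ m dvd z $$ (k, i)" if "k < i" "i < n" for k i
    using u that by (auto simp: U_pi_def U_set_def z_ij)
  have "w ^ m dvd z $$ (k, i)" if "k < n" "i < n" for k i
  proof (cases "k < i")
    case False
    then show ?thesis using z_lower[of i k] that by (auto intro: dvd_mult_left)
  qed (use z_upper that in simp)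
  then obtain y where yC: "y \<in> carrier_mat n n" and zy: "z = w ^ m \<cdot>\<^sub>m y"
    using smult_mat_obtain[OF zC] by blast
  have "u = 1\<^sub>m n + w ^ m \<cdot>\<^sub>m y"
    using uC unfolding zy[symmetric] z_def by auto
  moreover have "w ^ m * mtrace (x * y) = mtrace (x * z)"
    using xC yC by (simp add: zy mult_smult_distrib mtrace_smult[of "x * y" n])
  ultimately have "phi_x \<phi> w m x u = \<phi> (mtrace (x * z))"
    using \<open>w \<noteq> 0\<close> yC by (simp add: phi_x_one_plus_smult)
  also have "\<dots> = \<phi> (\<Sum>k<n - 1. subdiag a k * z $$ (k, k + 1))"
    using mtrace_mult_subdiag_cong[OF xC zC alpha_regular_entry[OF x] z_lower z_upper] wl
    by (intro add_char_dvd_diff_eq[OF ch]) simp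
  also have "(\<Sum>k<n - 1. subdiag a k * z $$ (k, k + 1)) = (\<Sum>k<n - 1. subdiag a k * u $$ (k, k + 1))"
    by (intro sum.cong) (auto simp: z_ij)
  also have "\<dots> = a * u $$ (0, 1) + (\<Sum>k\<in>{1..<n - 1}. u $$ (k, k + 1))"
    using sum_subdiag_eq[OF \<open>n \<ge> 2\<close>, of a "\<lambda>k. u $$ (k, k + 1)"] by simp
  finally show ?thesis using uC by (simp add: theta_def)
qed

theorem lemma4p3:
  fixes w :: "'a::idom" and \<phi> :: "'a \<Rightarrow> complex" and sl :: bool
    and n m l :: nat and a :: 'a and x xt :: "'a mat"
  assumes "local_int_ring w"
    and "sl \<longrightarrow> (\<forall>p. resid_char w p \<longrightarrow> odd p \<and> \<not> p dvd n)"
    and "n \<ge> 2"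
    and "l = 2 * m" and "m \<ge> 1"
    and "primitive_char w l \<phi>"
    and "\<exists>u. w ^ l dvd a * u - 1"
    and "x \<in> lie_alg sl w m n" and "alpha_regular w m n a x"
    and "xt \<in> lie_alg sl w l n" and "cong_mat w m n xt x"
  shows "U_set w l n \<inter> prod_mod sl w l n (centralizer sl w l n xt) (Kker sl w l m n) = U_pi w m l n
    \<and> (\<forall>u\<in>U_pi w m l n. phi_x \<phi> w m x u = theta \<phi> a u)
    \<and> (\<forall>\<chi>. is_char_on w l n (prod_mod sl w l n (centralizer sl w l n xt) (Kker sl w l m n)) \<chi>
           \<and> (\<forall>k\<in>Kker sl w l m n. \<chi> k = phi_x \<phi> w m x k)
           \<longrightarrow> hom_chars (U_pi w m l n) \<chi> (theta \<phi> a) \<noteq> {0})"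
proof -
  have "w \<noteq> 0" using assms(1) by (simp add: local_int_ring_def)
  have ch: "add_char w l \<phi>" using assms(6) by (simp add: primitive_char_def)
  have "m \<le> l" using assms(4) by simp
  have xC: "x \<in> carrier_mat n n" and xtC: "xt \<in> carrier_mat n n"
    using assms(8,10) by (simp_all add: lie_alg_def)
  have a_unit: "\<exists>v. w ^ m dvd a * v - 1"
    using assms(7) le_imp_power_dvd[OF \<open>m \<le> l\<close>, where a = w] by (blast intro: dvd_trans)
  have "U_set w l n \<inter> prod_mod sl w l n (centralizer sl w l n xt) (Kker sl w l m n) = U_pi w m l n"
    using \<open>m \<le> l\<close> xC xtC assms(9) a_unit assms(11) by (rule U_set_inter_prod_mod_eq)
  moreover have theta: "\<forall>u\<in>U_pi w m l n. phi_x \<phi> w m x u = theta \<phi> a u"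
    using phi_x_eq_theta_on_U_pi[OF \<open>w \<noteq> 0\<close> ch assms(4,3,9)] by blast
  moreover have "hom_chars (U_pi w m l n) \<chi> (theta \<phi> a) \<noteq> {0}"
    if "\<forall>k\<in>Kker sl w l m n. \<chi> k = phi_x \<phi> w m x k" for \<chi>
  proof -
    have "1 \<in> hom_chars (U_pi w m l n) \<chi> (theta \<phi> a)"
      using that theta U_pi_subset_Kker[OF \<open>m \<le> l\<close>, where w = w and n = n and sl = sl]
      by (auto simp: hom_chars_def)
    then show ?thesis by auto
  qed
  ultimately show ?thesis by blast
qed

end
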